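(* Assume the standing assumptions below hold and that $f(\cdot,0)$ satisfies the $\delta$-RIP$_{2r,2r}$ property with $\delta<1/3$. Let $\epsilon$ satisfy $0\le \epsilon<\frac{1/3-\delta}{\zeta_2}$ (interpreted as $\epsilon\in[0,\infty)$ when $\zeta_2=0$), and let $w\in\mathbb R^m$ satisfy $\|w\|_2\le\epsilon$. Then every local minimizer $\hat X\in\mathbb R^{n\times r}$ of $X\mapsto h(X,w)$ satisfies $$\|\hat X\hat X^\top-M^*\|_F\le \frac{2\zeta_1\epsilon}{1-3(\delta+\zeta_2\epsilon)}.$$ (Consequently, if $w$ is random, this holds for all local minimizers with probability at least $\mathbb P(\|w\|_2\le\epsilon)$.)
   Context: Standing assumptions. Let $n,r,m$ be positive integers, $r\le n$. Let $f:\mathbb R^{n\times n}\times\mathbb R^m\to\mathbb R$, $(M,w)\mapsto f(M,w)$, be twice continuously differentiable in its first argument $M$ for each fixed $w$, with gradient $\nabla_M f(M,w)\in\mathbb R^{n\times n}$ symmetric for all $M,w$. The Hessian is the bilinear form $[\nabla^2_M f(M,w)](K,L)=\sum_{i,j,k,l=1}^n\frac{\partial^2 f}{\partial M_{ij}\partial M_{kl}}(M,w)K_{ij}L_{kl}$. RIP: $f(\cdot,0)$ satisfies the $\delta$-RIP$_{2r,2r}$ property ($\delta\in[0,1)$) if $(1-\delta)\|N\|_F^2\le[\nabla^2_M f(M,0)](N,N)\le(1+\delta)\|N\|_F^2$ for all $M,N\in\mathbb R^{n\times n}$ with $\mathrm{rank}(M)\le 2r$, $\mathrm{rank}(N)\le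 2r$. Noise assumption: there are constants $\zeta_1,\zeta_2\ge0$ such that for all $w\in\mathbb R^m$ and all $M,K,L\in\mathbb R^{n\times n}$ of rank at most $2r$: $|\langle\nabla_M f(M,w)-\nabla_M f(M,0),K\rangle|\le\zeta_1\|w\|_2\|K\|_F$ and $|[\nabla^2_M f(M,w)-\nabla^2_M f(M,0)](K,L)|\le\zeta_2\|w\|_2\|K\|_F\|L\|_F$. Here $\langle A,B\rangle=\mathrm{tr}(A^\top B)$. Ground truth: $M^*\in\mathbb R^{n\times n}$ is symmetric positive semidefinite of rank $r$, minimizes $f(\cdot,0)$ over PSD matrices of rank at most $r$, and satisfies $\nabla_M f(M^*,0)=0$. Define $h(X,w)=f(XX^\top,w)$ for $X\in\mathbb R^{n\times r}$; a local minimizer of $h(\cdot,w)$ means a local minimizer of the unconstrained function $X\mapsto h(X,w)$ on $\mathbb R^{n\times r}$ with $w$ fixed. *)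

theory Defs
  imports "HOL-Analysis.Analysis"
begin

end

theory Submission
  imports Defs
begin

text \<open>Write \<open>M = X X\<^sup>T\<close> for the local minimiser \<open>X\<close>, \<open>E = M - M\<^sup>*\<close> and \<open>d = \<delta> + \<zeta>\<^sub>2 \<epsilon>\<close>;
  by the noise assumption the Hessian at noise \<open>w\<close> still satisfies the RIP with constant \<open>d\<close>.
  First-order stationarity gives \<open>\<nabla>f(M,w) X = 0\<close>, so \<open>\<langle>\<nabla>f(M,w), M\<rangle> = 0\<close>; the mean value theorem
  on the segment from \<open>M\<^sup>*\<close> to \<open>M\<close>, together with \<open>\<nabla>f(M\<^sup>*,0) = 0\<close>, then yields
  \<open>(1 - d) \<parallel>E\<parallel>\<^sup>2 - \<zeta>\<^sub>1 \<epsilon> \<parallel>E\<parallel> \<le> -\<langle>\<nabla>f(M,w), M\<^sup>*\<rangle>\<close>.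
  The second-order condition in the directions \<open>y v\<^sup>T\<close>, with \<open>v\<close> a least right singular vector of \<open>X\<close>
  (\<open>\<lambda> = \<parallel>X v\<parallel>\<^sup>2\<close>) and \<open>y \<bottom> range X\<close>, shows \<open>\<nabla>f(M,w) + (1 + d) \<lambda> (I - P) \<succeq> 0\<close> for the
  projection \<open>P\<close> onto the range of \<open>X\<close>; pairing with \<open>M\<^sup>* \<succeq> 0\<close> and the estimate
  \<open>2 \<lambda> \<langle>I - P, M\<^sup>*\<rangle> \<le> \<parallel>E\<parallel>\<^sup>2\<close> gives \<open>-\<langle>\<nabla>f(M,w), M\<^sup>*\<rangle> \<le> (1 + d)/2 \<parallel>E\<parallel>\<^sup>2\<close>.
  Adding the two bounds leaves \<open>(1 - 3d) \<parallel>E\<parallel>\<^sup>2 \<le> 2 \<zeta>\<^sub>1 \<epsilon> \<parallel>E\<parallel>\<close>.\<close>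

definition outer :: "real^'a \<Rightarrow> real^'b \<Rightarrow> real^'b^'a" where
  "outer x y = (\<chi> i j. x$i * y$j)"

definition psd :: "real^'n^'n \<Rightarrow> bool" where
  "psd A \<longleftrightarrow> (\<forall>x. 0 \<le> x \<bullet> (A *v x))"

lemma inner_matrix_eq_sum: "inner (A::real^'n^'m) B = (\<Sum>i\<in>UNIV. \<Sum>j\<in>UNIV. A$i$j * B$i$j)"
  by (simp add: inner_vec_def)

lemma inner_matrix_vector_eq_sum:
  "(x::real^'m) \<bullet> ((A::real^'n^'m) *v y) = (\<Sum>i\<in>UNIV. \<Sum>j\<in>UNIV. x$i * A$i$j * y$j)"
  by (simp add: inner_vec_def matrix_vector_mult_def sum_distrib_left mult.assoc)

lemma inner_outer_right: "inner (A::real^'n^'m) (outer x y) = x \<bullet> (A *v y)"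
  unfolding inner_matrix_eq_sum inner_matrix_vector_eq_sum outer_def
  by (simp add: mult.commute mult.left_commute)

lemma inner_outer_outer: "inner (outer (a::real^'n) (b::real^'m)) (outer c d) = (a \<bullet> c) * (b \<bullet> d)"
proof -
  have "inner (outer a b) (outer c d) = (\<Sum>i\<in>UNIV. \<Sum>j\<in>UNIV. (a$i * c$i) * (b$j * d$j))"
    unfolding inner_matrix_eq_sum outer_def by (simp add: mult.commute mult.left_commute)
  also have "\<dots> = (a \<bullet> c) * (b \<bullet> d)" by (simp add: inner_vec_def sum_product)
  finally show ?thesis .
qed

lemma transpose_outer: "transpose (outer a b) = outer b a"
  by (simp add: vec_eq_iff transpose_def outer_def mult.commute)

lemma matrix_mult_transpose_outer: "(X::real^'r^'n) ** transpose (outer y v) = outer (X *v v) y"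
  by (simp add: vec_eq_iff matrix_matrix_mult_def transpose_def outer_def matrix_vector_mult_def
      sum_distrib_left mult.commute mult.left_commute)

lemma outer_mult_transpose: "outer y v ** transpose (X::real^'r^'n) = outer y (X *v v)"
  using arg_cong[OF matrix_mult_transpose_outer[of X y v], of transpose]
  by (simp add: matrix_transpose_mul transpose_outer)

lemma outer_mult_transpose_outer:
  "outer (y::real^'n) (v::real^'r) ** transpose (outer y' v) = (v \<bullet> v) *\<^sub>R outer y y'"
  by (simp add: vec_eq_iff matrix_matrix_mult_def transpose_def outer_def inner_vec_def
      sum_distrib_left sum_distrib_right mult.commute mult.left_commute)

lemma quadratic_form_outer: "x \<bullet> (outer c c *v x) = (x \<bullet> c)\<^sup>2"
  using inner_outer_right[of "outer c c" x x] inner_outer_outer[of c c x x]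
  by (simp add: inner_outer_right power2_eq_square inner_commute)

lemma inner_matrix_mult_transpose:
  fixes A :: "real^'n^'m" and B :: "real^'k^'m" and C :: "real^'k^'n"
  shows "inner A (B ** transpose C) = inner (A ** C) B"
proof -
  have "inner A (B ** transpose C) = (\<Sum>i\<in>UNIV. \<Sum>j\<in>UNIV. \<Sum>k\<in>UNIV. A$i$j * B$i$k * C$j$k)"
    by (simp add: inner_matrix_eq_sum matrix_matrix_mult_def transpose_def sum_distrib_left mult.assoc)
  also have "\<dots> = (\<Sum>i\<in>UNIV. \<Sum>k\<in>UNIV. \<Sum>j\<in>UNIV. A$i$j * B$i$k * C$j$k)"
    by (rule sum.cong[OF refl], rule sum.swap)
  also have "\<dots> = inner (A ** C) B"
    by (simp add: inner_matrix_eq_sum matrix_matrix_mult_def sum_distrib_left sum_distrib_right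
        mult.commute mult.left_commute)
  finally show ?thesis .
qed

lemma inner_transpose_transpose: "inner (transpose (A::real^'n^'m)) (transpose B) = inner A B"
  unfolding inner_matrix_eq_sum transpose_def by simp (rule sum.swap)

lemma inner_eq_trace: "inner (A::real^'n^'m) B = trace (transpose A ** B)"
  unfolding inner_matrix_eq_sum trace_def transpose_def matrix_matrix_mult_def by simp (rule sum.swap)

lemma inner_mat1: "inner (mat 1 :: real^'n^'n) A = trace A"
  by (simp add: inner_eq_trace transpose_mat)

lemma symmetric_matrix_entry: "transpose (W::'a^'n^'n) = W \<Longrightarrow> W$i$j = W$j$i"
  by (drule arg_cong[where f = "\<lambda>A. A$j$i"]) (simp add: transpose_def)

lemma quadratic_form_symmetric:
  assumes "transpose (W::real^'n^'n) = W"
  shows "x \<bullet> (W *v y) = y \<bullet> (W *v x)"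
proof -
  have W: "W$i$j = W$j$i" for i j using assms by (rule symmetric_matrix_entry)
  have "x \<bullet> (W *v y) = (\<Sum>j\<in>UNIV. \<Sum>i\<in>UNIV. x$i * W$i$j * y$j)"
    unfolding inner_matrix_vector_eq_sum by (rule sum.swap)
  also have "\<dots> = y \<bullet> (W *v x)"
    unfolding inner_matrix_vector_eq_sum by (simp add: W mult.commute mult.left_commute)
  finally show ?thesis .
qed

lemma quadratic_form_axis: "axis i 1 \<bullet> ((A::real^'n^'m) *v axis j 1) = A$i$j"
  by (simp add: matrix_vector_mult_basis column_def inner_commute[of "axis i 1"] inner_axis)

lemma gram_quadratic_form: "a \<bullet> ((transpose Y ** Y) *v a) = (norm ((Y::real^'r^'n) *v a))\<^sup>2"
proof -
  have "a \<bullet> ((transpose Y ** Y) *v a) = (Y *v a) \<bullet> (Y *v a)"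
    by (simp add: matrix_vector_mul_assoc[symmetric] inner_commute[of a] dot_lmul_matrix)
  then show ?thesis by (simp add: power2_norm_eq_inner)
qed

lemma transpose_diff: "transpose ((A::real^'n^'m) - B) = transpose A - transpose B"
  by (simp add: vec_eq_iff transpose_def)

lemma psd_Cauchy_Schwarz:
  assumes sym: "transpose (W::real^'n^'n) = W" and W: "psd W"
  shows "(x \<bullet> (W *v y))\<^sup>2 \<le> (x \<bullet> (W *v x)) * (y \<bullet> (W *v y))"
proof -
  define a b c where "a = x \<bullet> (W *v x)" and "b = x \<bullet> (W *v y)" and "c = y \<bullet> (W *v y)"
  have q: "0 \<le> a + 2*t*b + t\<^sup>2*c" for t
  proof -
    have "0 \<le> (x + t *\<^sub>R y) \<bullet> (W *v (x + t *\<^sub>R y))" using W psd_def by blast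
    also have "\<dots> = a + 2*t*b + t\<^sup>2*c"
      using quadratic_form_symmetric[OF sym, of y x]
      by (simp add: a_def b_def c_def algebra_simps matrix_vector_mult_scaleR power2_eq_square)
    finally show ?thesis .
  qed
  have "0 \<le> c" using W psd_def a_def b_def c_def by blast
  show ?thesis
  proof (cases "c = 0")
    case True
    have "b = 0"
    proof (rule ccontr)
      assume "b \<noteq> 0"
      have "0 \<le> a + 2*(-(a+1)/(2*b))*b" using q[of "-(a+1)/(2*b)"] True by simp
      also have "\<dots> = -1" using \<open>b \<noteq> 0\<close> by (simp add: field_simps)
      finally show False by simp
    qed
    then show ?thesis using True a_def b_def c_def by simp
  next
    case False
    with \<open>0 \<le> c\<close> have "0 < c" by simp
    have "0 \<le> a + 2*(-b/c)*b + (-b/c)\<^sup>2*c" by (rule q)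
    also have "\<dots> = a - b\<^sup>2/c" using \<open>0 < c\<close> by (simp add: field_simps power2_eq_square)
    finally have "b\<^sup>2 \<le> a * c" using \<open>0 < c\<close> by (simp add: pos_divide_le_eq)
    then show ?thesis by (simp add: a_def b_def c_def)
  qed
qed

lemma psd_diagonal_nonneg: "psd A \<Longrightarrow> 0 \<le> A$i$i"
  unfolding psd_def by (metis quadratic_form_axis)

lemma psd_zero_diagonal_row:
  assumes "transpose (W::real^'n^'n) = W" "psd W" "W$a$a = 0"
  shows "W$a$j = 0"
proof -
  have "(W$a$j)\<^sup>2 \<le> W$a$a * W$j$j"
    using psd_Cauchy_Schwarz[OF assms(1,2), of "axis a 1" "axis j 1"] by (simp add: quadratic_form_axis)
  then show ?thesis using assms(3) by simp
qed

text \<open>One step of symmetric Gaussian elimination with pivot \<open>W$a$a\<close>; it clears row \<open>a\<close>.\<close>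

lemma psd_Schur_complement:
  fixes W :: "real^'n^'n"
  assumes sym: "transpose W = W" and W: "psd W" and pos: "0 < W$a$a"
  defines "c \<equiv> \<chi> i. W$i$a"
  defines "W' \<equiv> W - (1 / W$a$a) *\<^sub>R outer c c"
  shows "transpose W' = W'" "psd W'" "W'$i$j = W$i$j - W$i$a * W$j$a / W$a$a"
proof -
  show "transpose W' = W'"
    unfolding W'_def by (simp add: transpose_diff transpose_scalar sym transpose_outer)
  show "psd W'"
    unfolding psd_def
  proof
    fix x
    have c: "c = W *v axis a 1" by (simp add: c_def matrix_vector_mult_basis column_def)
    have cs: "(x \<bullet> c)\<^sup>2 \<le> (x \<bullet> (W *v x)) * W$a$a"
      using psd_Cauchy_Schwarz[OF sym W, of x "axis a 1"] by (simp add: quadratic_form_axis c)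
    have "x \<bullet> (W' *v x) = x \<bullet> (W *v x) - (x \<bullet> c)\<^sup>2 / W$a$a"
      unfolding W'_def by (simp add: matrix_vector_mult_diff_rdistrib inner_diff_right quadratic_form_outer
          scaleR_matrix_vector_assoc[symmetric])
    also have "\<dots> \<ge> 0" using cs pos by (simp add: divide_le_eq)
    finally show "0 \<le> x \<bullet> (W' *v x)" by simp
  qed
  show "W'$i$j = W$i$j - W$i$a * W$j$a / W$a$a"
    by (simp add: W'_def outer_def c_def)
qed

lemma psd_inner_nonneg:
  assumes S: "psd (S::real^'n^'n)" and sym: "transpose W = W" and W: "psd W"
  shows "0 \<le> inner S W"
proof -
  have main: "0 \<le> inner S W" if "finite F" "transpose W = W" "psd W" "\<forall>i. i \<notin> F \<longrightarrow> W$i = 0"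
    for F and W :: "real^'n^'n"
    using that
  proof (induction F arbitrary: W)
    case empty
    then have "W = 0" by (simp add: vec_eq_iff)
    then show ?case by simp
  next
    case (insert a F)
    have Wsym: "W$i$j = W$j$i" for i j using insert.prems(1) by (rule symmetric_matrix_entry)
    show ?case
    proof (cases "W$a$a = 0")
      case True
      have "W$a = 0"
        using psd_zero_diagonal_row[OF insert.prems(1,2) True] by (simp add: vec_eq_iff)
      then have "\<forall>i. i \<notin> F \<longrightarrow> W$i = 0" using insert.prems(3) by auto
      then show ?thesis using insert.IH insert.prems(1,2) by blast
    next
      case False
      with psd_diagonal_nonneg[OF insert.prems(2), of a] have pos: "0 < W$a$a" by simp
      define c where "c = (\<chi> i. W$i$a)"
      define W' where "W' = W - (1 / W$a$a) *\<^sub>R outer c c"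
      note Schur = psd_Schur_complement[OF insert.prems(1,2) pos, folded c_def, folded W'_def]
      have "W'$i = 0" if "i \<notin> F" for i
      proof (cases "i = a")
        case True
        have "W'$a$j = 0" for j using pos by (simp add: Schur(3) Wsym[of j a])
        then show ?thesis using True by (simp add: vec_eq_iff)
      next
        case False
        with that insert.prems(3) have "W$i = 0" by simp
        then show ?thesis by (simp add: vec_eq_iff Schur(3))
      qed
      then have "0 \<le> inner S W'" using insert.IH Schur(1,2) by blast
      moreover have "0 \<le> inner S (outer c c)" using S by (simp add: inner_outer_right psd_def)
      moreover have "inner S W = inner S W' + (1 / W$a$a) * inner S (outer c c)"
        unfolding W'_def by (simp add: inner_diff_right)
      ultimately show ?thesis using pos by simp
    qed
  qed
  show ?thesis using main[of UNIV] sym W by simp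
qed

lemma projection_quadratic_form:
  assumes "transpose (P::real^'n^'n) = P" "P ** P = P"
  shows "x \<bullet> (P *v x) = (norm (P *v x))\<^sup>2"
proof -
  have "(norm (P *v x))\<^sup>2 = x \<bullet> ((transpose P ** P) *v x)" by (rule gram_quadratic_form[symmetric])
  then show ?thesis using assms by simp
qed

lemma psd_complement_projection:
  assumes sym: "transpose (P::real^'n^'n) = P" and idem: "P ** P = P"
  shows "psd (mat 1 - P)"
  unfolding psd_def
proof
  fix x
  have "x \<bullet> ((mat 1 - P) *v x) = (x - P *v x) \<bullet> (x - P *v x)"
    using projection_quadratic_form[OF sym idem, of x] quadratic_form_symmetric[OF sym, of x "P *v x"]
    by (simp add: matrix_vector_mult_diff_rdistrib inner_diff_left inner_diff_right inner_commute
        power2_norm_eq_inner)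
  then show "0 \<le> x \<bullet> ((mat 1 - P) *v x)" by simp
qed

definition is_column_projection :: "real^'n^'n \<Rightarrow> real^'r^'n \<Rightarrow> bool" where
  "is_column_projection P X \<longleftrightarrow> transpose P = P \<and> P ** X = X \<and> (\<exists>C. P = X ** C)"

lemma column_projection_idem: "is_column_projection P X \<Longrightarrow> P ** P = P"
  unfolding is_column_projection_def by (metis matrix_mul_assoc)

lemma column_projection_transpose_factor:
  "is_column_projection P X \<Longrightarrow> transpose X ** P = transpose X"
  unfolding is_column_projection_def by (metis matrix_transpose_mul)

lemma column_projection_inner_self: "is_column_projection P X \<Longrightarrow> inner P P = trace P"
  using column_projection_idem[of P X] by (simp add: is_column_projection_def inner_eq_trace)

lemma psd_complement_column_projection: "is_column_projection P X \<Longrightarrow> psd (mat 1 - P)"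
  using psd_complement_projection column_projection_idem is_column_projection_def by blast

lemma column_projection_fixes:
  assumes "is_column_projection P Y" "range ((*v) A) \<subseteq> range ((*v) Y)"
  shows "P ** A = A"
  unfolding matrix_eq
proof
  fix x
  obtain a where "A *v x = Y *v a" using assms(2) by blast
  moreover have "P *v (Y *v a) = Y *v a"
    using assms(1) by (simp add: matrix_vector_mul_assoc is_column_projection_def)
  ultimately show "(P ** A) *v x = A *v x" by (simp add: matrix_vector_mul_assoc[symmetric])
qed

text \<open>For injective \<open>X\<close> the projection is \<open>X (X\<^sup>T X)\<^sup>-\<^sup>1 X\<^sup>T\<close>.\<close>

lemma exists_column_projection:
  fixes X :: "real^'r^'n"
  assumes inj: "inj ((*v) X)"
  obtains P where "is_column_projection P X" "trace P = real CARD('r)"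
proof -
  have "(transpose X ** X) *v a = 0 \<Longrightarrow> a = 0" for a
    using gram_quadratic_form[of a X] inj by (simp add: vec.inj_iff_eq_0)
  then obtain B :: "real^'r^'r" where B: "B ** (transpose X ** X) = mat 1"
    using matrix_left_invertible_ker by blast
  then have B': "(transpose X ** X) ** B = mat 1"
    using matrix_left_right_inverse by blast
  have "transpose B ** (transpose X ** X) = mat 1"
    using arg_cong[OF B', of transpose] by (simp add: matrix_transpose_mul)
  then have Bsym: "transpose B = B"
    by (metis B' matrix_mul_assoc matrix_mul_lid matrix_mul_rid)
  define P where "P = X ** (B ** transpose X)"
  have "transpose P = P" by (simp add: P_def matrix_transpose_mul Bsym matrix_mul_assoc)
  moreover have "P ** X = X" by (metis B P_def matrix_mul_assoc matrix_mul_rid)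
  ultimately have "is_column_projection P X" unfolding is_column_projection_def P_def by blast
  moreover have "trace P = trace ((transpose X ** X) ** B)"
    by (metis P_def matrix_mul_assoc trace_mul_sym)
  then have "trace P = real CARD('r)" by (simp add: B' trace_I)
  ultimately show ?thesis using that by blast
qed

lemma exists_injective_columns_spanning_range:
  fixes A :: "real^'k^'n"
  assumes rk: "rank A = CARD('r)"
  obtains Y :: "real^'r^'n" where "inj ((*v) Y)" "range ((*v) A) \<subseteq> range ((*v) Y)"
proof -
  obtain Bs where Bs: "Bs \<subseteq> range ((*v) A)" "range ((*v) A) \<subseteq> span Bs"
    "card Bs = dim (range ((*v) A))"
    by (rule basis_exists)
  then have "card Bs = CARD('r)" using rk rank_dim_range by metis
  then obtain g where g: "bij_betw g (UNIV::'r set) Bs"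
    by (metis card_ge_0_finite finite_UNIV finite_same_card_bij zero_less_card_finite)
  define Y :: "real^'r^'n" where "Y = (\<chi> i j. g j $ i)"
  have "Bs \<subseteq> range ((*v) Y)"
  proof
    fix b assume "b \<in> Bs"
    then obtain j where "b = g j" using g by (metis bij_betw_imp_surj_on imageE)
    then have "b = Y *v axis j 1" by (simp add: matrix_vector_mult_basis column_def Y_def)
    then show "b \<in> range ((*v) Y)" by simp
  qed
  then have "span Bs \<subseteq> range ((*v) Y)"
    by (rule span_minimal[OF _ linear_subspace_image[OF matrix_vector_mul_linear subspace_UNIV]])
  with Bs(2) have range: "range ((*v) A) \<subseteq> range ((*v) Y)" by (rule order_trans)
  have "CARD('r) \<le> rank Y"
    unfolding rk[symmetric] rank_dim_range using range by (metis dim_subset)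
  then have "rank Y = CARD('r)" using rank_bound[of Y] by simp
  then show ?thesis using that range full_rank_injective by blast
qed

lemma rank_add_le: "rank ((A::real^'n^'m) + B) \<le> rank A + rank B"
proof -
  let ?S = "range ((*v) A)" and ?T = "range ((*v) B)"
  have sub: "subspace (range ((*v) C))" for C :: "real^'n^'m"
    by (rule linear_subspace_image[OF matrix_vector_mul_linear subspace_UNIV])
  have "range ((*v) (A + B)) \<subseteq> {x + y |x y. x \<in> ?S \<and> y \<in> ?T}"
    by (auto simp: matrix_vector_mult_add_rdistrib)
  then have "rank (A + B) \<le> dim {x + y |x y. x \<in> ?S \<and> y \<in> ?T}"
    unfolding rank_dim_range by (rule dim_subset)
  also have "\<dots> \<le> dim ?S + dim ?T"
    using dim_sums_Int[OF sub sub, of A B] by linarith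
  finally show ?thesis unfolding rank_dim_range .
qed

lemma rank_scaleR_le: "rank (c *\<^sub>R (A::real^'n^'m)) \<le> rank A"
proof -
  have "(c *\<^sub>R A) ** mat 1 = A ** (c *\<^sub>R mat 1)"
    by (simp add: matrix_scalar_ac)
  then show ?thesis by (metis rank_mul_le_left matrix_mul_rid)
qed

lemma rank_diff_le: "rank ((A::real^'n^'m) - B) \<le> rank A + rank B"
  using rank_add_le[of A "(-1) *\<^sub>R B"] rank_scaleR_le[of "-1" B] by simp

lemma rank_segment_le: "rank (A + t *\<^sub>R (B - A)) \<le> rank A + rank (B::real^'n^'m)"
proof -
  have "A + t *\<^sub>R (B - A) = (1 - t) *\<^sub>R A + t *\<^sub>R B" by (simp add: algebra_simps)
  then show ?thesis
    using rank_add_le[of "(1 - t) *\<^sub>R A" "t *\<^sub>R B"] rank_scaleR_le[of "1 - t" A] rank_scaleR_le[of t B]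
    by simp
qed

lemma local_min_derivative_conditions:
  fixes \<phi> \<phi>' :: "real \<Rightarrow> real"
  assumes d1: "\<And>t. (\<phi> has_real_derivative \<phi>' t) (at t)"
    and d2: "(\<phi>' has_real_derivative a) (at 0)"
    and min: "\<exists>e>0. \<forall>t. \<bar>t\<bar> < e \<longrightarrow> \<phi> 0 \<le> \<phi> t"
  shows "\<phi>' 0 = 0" "0 \<le> a"
proof -
  obtain e where e: "e > 0" "\<forall>t. \<bar>t\<bar> < e \<longrightarrow> \<phi> 0 \<le> \<phi> t" using min by blast
  show "\<phi>' 0 = 0"
    by (rule DERIV_local_min[OF d1 e(1)]) (use e(2) in simp)
  show "0 \<le> a"
  proof (rule ccontr)
    assume "\<not> 0 \<le> a"
    have "((\<lambda>y. (\<phi>' y - \<phi>' 0) / (y - 0)) \<longlongrightarrow> a) (at 0)"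
      using d2 has_field_derivative_iff by blast
    then have "eventually (\<lambda>y. (\<phi>' y - \<phi>' 0) / (y - 0) < a/2) (at 0)"
      by (rule order_tendstoD) (use \<open>\<not> 0 \<le> a\<close> in simp)
    then obtain d where d: "d > 0" "\<forall>y. y \<noteq> 0 \<and> dist y 0 < d \<longrightarrow> \<phi>' y / y < a/2"
      using \<open>\<phi>' 0 = 0\<close> unfolding eventually_at by auto
    define t where "t = min d e / 2"
    have t: "0 < t" "t < d" "t < e" using d e by (auto simp: t_def)
    obtain z where z: "0 < z" "z < t" "\<phi> t - \<phi> 0 = (t - 0) * \<phi>' z"
      using MVT2[of 0 t \<phi> \<phi>'] t d1 by blast
    have "\<phi>' z / z < a/2" using d(2)[rule_format, of z] z t by (simp add: dist_real_def)
    then have "\<phi>' z / z < 0" using \<open>\<not> 0 \<le> a\<close> by linarith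
    then have "t * \<phi>' z < 0" using z(1) t(1) by (simp add: divide_less_0_iff mult_pos_neg)
    then have "\<phi> t < \<phi> 0" using z(3) by simp
    moreover have "\<phi> 0 \<le> \<phi> t" using e(2) t by simp
    ultimately show False by simp
  qed
qed

lemma local_min_on_line:
  fixes g :: "'a::real_normed_vector \<Rightarrow> real"
  assumes "\<exists>e>0. \<forall>Y. dist Y X < e \<longrightarrow> g X \<le> g Y"
  shows "\<exists>e>0. \<forall>t. \<bar>t\<bar> < e \<longrightarrow> g X \<le> g (X + t *\<^sub>R U)"
proof -
  obtain e where e: "e > 0" "\<forall>Y. dist Y X < e \<longrightarrow> g X \<le> g Y" using assms by blast
  have "g X \<le> g (X + t *\<^sub>R U)" if "\<bar>t\<bar> < e / (norm U + 1)" for t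
  proof -
    have "dist (X + t *\<^sub>R U) X = \<bar>t\<bar> * norm U" by (simp add: dist_norm)
    also have "\<dots> \<le> \<bar>t\<bar> * (norm U + 1)" by (simp add: mult_left_mono)
    also have "\<dots> < e" using that by (simp add: pos_less_divide_eq add_nonneg_pos)
    finally show ?thesis using e(2) by blast
  qed
  moreover have "e / (norm U + 1) > 0" using e(1) by (simp add: add_nonneg_pos)
  ultimately show ?thesis by blast
qed

lemma factorization_on_line:
  fixes X U :: "real^'r^'n"
  shows "(X + t *\<^sub>R U) ** transpose (X + t *\<^sub>R U) =
    X ** transpose X + t *\<^sub>R (X ** transpose U + U ** transpose X) + (t*t) *\<^sub>R (U ** transpose U)"
  by (simp add: vec_eq_iff matrix_matrix_mult_def transpose_def algebra_simps sum.distrib sum_distrib_left)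

lemma local_min_factorization_conditions:
  fixes f :: "real^'n^'n \<Rightarrow> real" and G :: "real^'n^'n \<Rightarrow> real^'n^'n"
    and Hd :: "real^'n^'n \<Rightarrow> real^'n^'n \<Rightarrow> real^'n^'n" and X U :: "real^'r^'n"
  assumes grad: "\<And>M. (f has_derivative (\<lambda>K. G M \<bullet> K)) (at M)"
    and hess: "\<And>M. (G has_derivative Hd M) (at M)"
    and min: "\<exists>e>0. \<forall>Y::real^'r^'n. dist Y X < e \<longrightarrow> f (X ** transpose X) \<le> f (Y ** transpose Y)"
  defines "D \<equiv> X ** transpose U + U ** transpose X"
  shows "G (X ** transpose X) \<bullet> D = 0"
    "0 \<le> 2 * (G (X ** transpose X) \<bullet> (U ** transpose U)) + Hd (X ** transpose X) D \<bullet> D"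
proof -
  define M Q where "M = X ** transpose X" and "Q = U ** transpose U"
  define \<Phi> where "\<Phi> t = M + t *\<^sub>R D + (t*t) *\<^sub>R Q" for t
  have line: "(X + t *\<^sub>R U) ** transpose (X + t *\<^sub>R U) = \<Phi> t" for t
    unfolding \<Phi>_def M_def Q_def D_def by (rule factorization_on_line)
  have \<Phi>0: "\<Phi> 0 = M" by (simp add: \<Phi>_def)
  have d\<Phi>: "(\<Phi> has_derivative (\<lambda>h. h *\<^sub>R (D + (2*t) *\<^sub>R Q))) (at t)" for t
    unfolding \<Phi>_def by (auto intro!: derivative_eq_intros simp: algebra_simps)
  define \<phi>' where "\<phi>' t = G (\<Phi> t) \<bullet> (D + (2*t) *\<^sub>R Q)" for t
  have d1: "((\<lambda>t. f (\<Phi> t)) has_real_derivative \<phi>' t) (at t)" for t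
  proof -
    have "((\<lambda>t. f (\<Phi> t)) has_derivative (\<lambda>h. G (\<Phi> t) \<bullet> (h *\<^sub>R (D + (2*t) *\<^sub>R Q)))) (at t)"
      using has_derivative_compose[OF d\<Phi> grad] .
    then show ?thesis by (simp add: has_field_derivative_def \<phi>'_def mult_commute_abs)
  qed
  have lin: "linear (Hd M)" using has_derivative_linear[OF hess] .
  have d2: "(\<phi>' has_real_derivative (2 * (G M \<bullet> Q) + Hd M D \<bullet> D)) (at 0)"
  proof -
    have "((\<lambda>t. G (\<Phi> t)) has_derivative (\<lambda>h. Hd M (h *\<^sub>R (D + (2*0) *\<^sub>R Q)))) (at 0)"
      using has_derivative_compose[OF d\<Phi>[of 0] hess] by (simp add: \<Phi>0)
    moreover have "((\<lambda>t. D + (2*t) *\<^sub>R Q) has_derivative (\<lambda>h. (2*h) *\<^sub>R Q)) (at 0)"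
      by (auto intro!: derivative_eq_intros)
    ultimately have "(\<phi>' has_derivative
        (\<lambda>h. G (\<Phi> 0) \<bullet> ((2*h) *\<^sub>R Q) + Hd M (h *\<^sub>R (D + (2*0) *\<^sub>R Q)) \<bullet> (D + (2*0) *\<^sub>R Q))) (at 0)"
      unfolding \<phi>'_def[abs_def] by (rule has_derivative_inner)
    moreover have "(\<lambda>h. G (\<Phi> 0) \<bullet> ((2*h) *\<^sub>R Q) + Hd M (h *\<^sub>R (D + (2*0) *\<^sub>R Q)) \<bullet> (D + (2*0) *\<^sub>R Q))
        = (*) (2 * (G M \<bullet> Q) + Hd M D \<bullet> D)"
      by (rule ext) (simp add: \<Phi>0 linear_scale[OF lin] algebra_simps)
    ultimately show ?thesis by (simp add: has_field_derivative_def)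
  qed
  have "\<exists>e>0. \<forall>t. \<bar>t\<bar> < e \<longrightarrow> f (\<Phi> 0) \<le> f (\<Phi> t)"
    using local_min_on_line[where g = "\<lambda>Y. f (Y ** transpose Y)" and U = U, OF min] by (simp add: line M_def Q_def \<Phi>0)
  note conditions = local_min_derivative_conditions[OF d1 d2 this]
  show "G (X ** transpose X) \<bullet> D = 0"
    using conditions(1) by (simp add: \<phi>'_def \<Phi>0 M_def Q_def)
  show "0 \<le> 2 * (G (X ** transpose X) \<bullet> (U ** transpose U)) + Hd (X ** transpose X) D \<bullet> D"
    using conditions(2) by (simp add: M_def Q_def)
qed

lemma inner_increment_ge_curvature:
  fixes G :: "'a::real_inner \<Rightarrow> 'a" and Hd :: "'a \<Rightarrow> 'a \<Rightarrow> 'a"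
  assumes hess: "\<And>M. (G has_derivative Hd M) (at M)"
    and curv: "\<And>t. 0 < t \<Longrightarrow> t < 1 \<Longrightarrow> \<mu> * (norm E)\<^sup>2 \<le> Hd (A + t *\<^sub>R E) E \<bullet> E"
  shows "\<mu> * (norm E)\<^sup>2 \<le> (G (A + E) - G A) \<bullet> E"
proof -
  define \<psi> where "\<psi> t = G (A + t *\<^sub>R E) \<bullet> E" for t
  have "(\<psi> has_real_derivative Hd (A + t *\<^sub>R E) E \<bullet> E) (at t)" for t
  proof -
    have "((\<lambda>t. A + t *\<^sub>R E) has_derivative (\<lambda>h. h *\<^sub>R E)) (at t)"
      by (auto intro!: derivative_eq_intros)
    from has_derivative_compose[OF this hess]
    have "((\<lambda>t. G (A + t *\<^sub>R E)) has_derivative (\<lambda>h. Hd (A + t *\<^sub>R E) (h *\<^sub>R E))) (at t)" .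
    then have "(\<psi> has_derivative (\<lambda>h. G (A + t *\<^sub>R E) \<bullet> 0 + Hd (A + t *\<^sub>R E) (h *\<^sub>R E) \<bullet> E)) (at t)"
      unfolding \<psi>_def[abs_def] by (rule has_derivative_inner[OF _ has_derivative_const])
    then show ?thesis
      by (simp add: has_field_derivative_def linear_scale[OF has_derivative_linear[OF hess]]
          mult_commute_abs)
  qed
  then obtain \<xi> where "0 < \<xi>" "\<xi> < 1" "\<psi> 1 - \<psi> 0 = Hd (A + \<xi> *\<^sub>R E) E \<bullet> E"
    using MVT2[of 0 1 \<psi>] by force
  then show ?thesis using curv by (simp add: \<psi>_def inner_diff_left)
qed

lemma rank_factorization_le: "rank ((X::real^'r^'n) ** transpose X) \<le> CARD('r)"
  using rank_mul_le_left[of X "transpose X"] rank_bound[of X] by simp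

lemma symmetric_annihilates_factor:
  fixes S :: "real^'n^'n" and X :: "real^'r^'n"
  assumes sym: "transpose S = S"
    and orth: "\<And>U. S \<bullet> (X ** transpose U + U ** transpose X) = 0"
  shows "S ** X = 0"
proof -
  have "S \<bullet> (X ** transpose U) = S \<bullet> (U ** transpose X)" for U
    using inner_transpose_transpose[of S "U ** transpose X"] sym by (simp add: matrix_transpose_mul)
  then have "2 * ((S ** X) \<bullet> U) = 0" for U
    using orth[of U] inner_matrix_mult_transpose[of S U X] by (simp add: inner_add_right)
  from this[of "S ** X"] show ?thesis by simp
qed

lemma exists_minimal_gain:
  fixes X :: "real^'r^'n"
  obtains v where "norm v = 1" "\<And>a. (norm (X *v v))\<^sup>2 * (norm a)\<^sup>2 \<le> (norm (X *v a))\<^sup>2"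
proof -
  have "sphere (0::real^'r) 1 \<noteq> {}"
    using vector_choose_size[of 1, where 'a = "real^'r"] by auto
  then have "\<exists>v\<in>sphere 0 1. \<forall>u\<in>sphere 0 1. norm (X *v v) \<le> norm (X *v u)"
    by (rule continuous_attains_inf[OF compact_sphere]) (intro continuous_intros)
  then obtain v :: "real^'r" where v: "norm v = 1" "\<And>u. norm u = 1 \<Longrightarrow> norm (X *v v) \<le> norm (X *v u)"
    by auto
  have "norm (X *v v) * norm a \<le> norm (X *v a)" for a
  proof (cases "a = 0")
    case False
    have "norm (X *v v) \<le> norm (X *v ((1 / norm a) *\<^sub>R a))" using v(2) False by simp
    also have "\<dots> = norm (X *v a) / norm a" by (simp add: matrix_vector_mult_scaleR)
    finally show ?thesis using False by (simp add: pos_le_divide_eq)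
  qed simp
  then have "(norm (X *v v))\<^sup>2 * (norm a)\<^sup>2 \<le> (norm (X *v a))\<^sup>2" for a
    by (metis power_mono power_mult_distrib mult_nonneg_nonneg norm_ge_zero)
  with v(1) show ?thesis using that by blast
qed

text \<open>Second-order condition tested with the rank-one direction \<open>U = y v\<^sup>T\<close>: then
  \<open>U U\<^sup>T = y y\<^sup>T\<close> and, when \<open>y \<bottom> X v\<close>, \<open>\<parallel>X U\<^sup>T + U X\<^sup>T\<parallel>\<^sup>2 = 2 \<parallel>X v\<parallel>\<^sup>2 \<parallel>y\<parallel>\<^sup>2\<close>.\<close>

lemma second_order_direction_bound:
  fixes S :: "real^'n^'n" and H :: "real^'n^'n \<Rightarrow> real^'n^'n" and X :: "real^'r^'n"
  assumes so: "\<And>U. 0 \<le> 2 * (S \<bullet> (U ** transpose U))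
      + H (X ** transpose U + U ** transpose X) \<bullet> (X ** transpose U + U ** transpose X)"
    and upper: "\<And>D. rank D \<le> 2 * CARD('r) \<Longrightarrow> H D \<bullet> D \<le> c * (norm D)\<^sup>2"
    and v: "norm v = 1" and y: "(X *v v) \<bullet> y = 0"
  shows "- (c * (norm (X *v v))\<^sup>2 * (norm y)\<^sup>2) \<le> y \<bullet> (S *v y)"
proof -
  define U where "U = outer y v"
  define D where "D = X ** transpose U + U ** transpose X"
  have D: "D = outer (X *v v) y + outer y (X *v v)"
    by (simp add: D_def U_def matrix_mult_transpose_outer outer_mult_transpose)
  have "v \<bullet> v = 1" using v by (simp add: power2_norm_eq_inner[symmetric])
  then have UU: "U ** transpose U = outer y y" by (simp add: U_def outer_mult_transpose_outer)
  have "rank (X ** transpose U) \<le> CARD('r)" "rank (U ** transpose X) \<le> CARD('r)"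
    using rank_mul_le_left[of X] rank_mul_le_right[of U "transpose X"] rank_transpose[of X]
      rank_bound[of X] by (metis min.bounded_iff order_trans)+
  then have "rank D \<le> 2 * CARD('r)" using rank_add_le D_def by (metis add_mono mult_2 order_trans)
  then have "H D \<bullet> D \<le> c * (norm D)\<^sup>2" by (rule upper)
  moreover have "(norm D)\<^sup>2 = 2 * ((norm (X *v v))\<^sup>2 * (norm y)\<^sup>2)"
    using y by (simp add: D power2_norm_eq_inner inner_add_left inner_add_right inner_outer_outer
        inner_commute)
  moreover have "S \<bullet> (U ** transpose U) = y \<bullet> (S *v y)" by (simp add: UU inner_outer_right)
  ultimately show ?thesis using so[of U] D_def by (simp add: algebra_simps)
qed

lemma psd_add_scaled_complement_projection:
  fixes S :: "real^'n^'n" and X :: "real^'r^'n"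
  assumes sym: "transpose S = S" and SX: "S ** X = 0" and P: "is_column_projection P X"
    and bound: "\<And>y. transpose X *v y = 0 \<Longrightarrow> - (\<mu> * (norm y)\<^sup>2) \<le> y \<bullet> (S *v y)"
  shows "psd (S + \<mu> *\<^sub>R (mat 1 - P))"
  unfolding psd_def
proof
  fix x
  define y where "y = x - P *v x"
  have "transpose X *v y = 0"
    using column_projection_transpose_factor[OF P]
    by (simp add: y_def matrix_vector_mult_diff_distrib matrix_vector_mul_assoc)
  then have Sy: "- (\<mu> * (norm y)\<^sup>2) \<le> y \<bullet> (S *v y)" by (rule bound)
  obtain C where "P = X ** C" using P is_column_projection_def by blast
  then have "S *v (P *v x) = 0" using SX by (simp add: matrix_vector_mul_assoc matrix_mul_assoc)
  then have "S *v x = S *v y" by (simp add: y_def matrix_vector_mult_diff_distrib)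
  then have "x \<bullet> (S *v x) = y \<bullet> (S *v y)"
    by (metis quadratic_form_symmetric[OF sym] inner_diff_left y_def \<open>S *v (P *v x) = 0\<close>
        inner_zero_right diff_zero)
  moreover have "x \<bullet> ((mat 1 - P) *v x) = (norm y)\<^sup>2"
    using projection_quadratic_form[OF _ column_projection_idem[OF P], of x] P
      quadratic_form_symmetric[of P x "P *v x"]
    by (simp add: is_column_projection_def y_def power2_norm_eq_inner matrix_vector_mult_diff_rdistrib
        inner_diff_left inner_diff_right inner_commute)
  ultimately have "x \<bullet> ((S + \<mu> *\<^sub>R (mat 1 - P)) *v x) = y \<bullet> (S *v y) + \<mu> * (norm y)\<^sup>2"
    by (simp add: matrix_vector_mult_add_rdistrib inner_add_right scaleR_matrix_vector_assoc[symmetric])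
  with Sy show "0 \<le> x \<bullet> ((S + \<mu> *\<^sub>R (mat 1 - P)) *v x)" by linarith
qed

lemma psd_gram_minus_scaled_projection:
  fixes X :: "real^'r^'n"
  assumes P: "is_column_projection P X" and lam: "0 \<le> lam"
    and gain: "\<And>a. lam * (norm a)\<^sup>2 \<le> (norm (X *v a))\<^sup>2"
  shows "psd (X ** transpose X - lam *\<^sub>R P)"
  unfolding psd_def
proof
  fix x
  obtain C where C: "P = X ** C" using P is_column_projection_def by blast
  define a u s where "a = C *v x" and "u = X *v a" and "s = transpose X *v x"
  have Px: "P *v x = u" by (simp add: C a_def u_def matrix_vector_mul_assoc)
  have "transpose X *v u = s"
    using column_projection_transpose_factor[OF P] Px
    by (metis s_def matrix_vector_mul_assoc)
  then have us: "(norm u)\<^sup>2 = a \<bullet> s"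
    using gram_quadratic_form[of a X] by (simp add: u_def matrix_vector_mul_assoc[symmetric])
  have "x \<bullet> ((X ** transpose X) *v x) = (norm s)\<^sup>2"
    using gram_quadratic_form[of x "transpose X"] by (simp add: s_def)
  moreover have "x \<bullet> (P *v x) = (norm u)\<^sup>2"
    using projection_quadratic_form[of P x] column_projection_idem[OF P] P Px
    by (simp add: is_column_projection_def)
  moreover have "lam * (norm u)\<^sup>2 \<le> (norm s)\<^sup>2"
  proof (cases "u = 0")
    case False
    have "(norm u)\<^sup>2 \<le> norm a * norm s" using us norm_cauchy_schwarz[of a s] by simp
    then have "lam * ((norm u)\<^sup>2)\<^sup>2 \<le> (lam * (norm a)\<^sup>2) * (norm s)\<^sup>2"
      using lam by (metis mult_left_mono power_mono power_mult_distrib zero_le_power2 mult.assoc)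
    also have "\<dots> \<le> (norm u)\<^sup>2 * (norm s)\<^sup>2"
      using gain[of a] by (simp add: u_def mult_right_mono)
    finally show ?thesis using False by (simp add: power2_eq_square mult_le_cancel_left_pos)
  qed simp
  ultimately show "0 \<le> x \<bullet> ((X ** transpose X - lam *\<^sub>R P) *v x)"
    by (simp add: matrix_vector_mult_diff_rdistrib inner_diff_right scaleR_matrix_vector_assoc[symmetric])
qed

text \<open>Only the part of \<open>A - K\<close> in the range of \<open>A\<close> can contribute positively to the trace, and that
  range has dimension \<open>rank A\<close>.\<close>

lemma trace_diff_psd_le:
  fixes A K :: "real^'n^'n"
  assumes rk: "rank A = CARD('r::finite)" and K: "psd K" "transpose K = K"
  shows "trace (A - K) \<le> sqrt (real CARD('r)) * norm (A - K)"
proof -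
  obtain Y :: "real^'r^'n" where Y: "inj ((*v) Y)" "range ((*v) A) \<subseteq> range ((*v) Y)"
    using exists_injective_columns_spanning_range[OF rk] by blast
  obtain P where P: "is_column_projection P Y" "trace P = real CARD('r)"
    using exists_column_projection[OF Y(1)] by blast
  have "P \<bullet> A = trace A"
    using column_projection_fixes[OF P(1) Y(2)] P(1) by (simp add: inner_eq_trace is_column_projection_def)
  then have "(mat 1 - P) \<bullet> A = 0" by (simp add: inner_diff_left inner_mat1)
  moreover have "0 \<le> (mat 1 - P) \<bullet> K"
    using psd_inner_nonneg[OF psd_complement_column_projection[OF P(1)] K(2,1)] .
  moreover have "trace (A - K) = P \<bullet> (A - K) + (mat 1 - P) \<bullet> A - (mat 1 - P) \<bullet> K"
    by (simp add: inner_mat1[symmetric] inner_diff_left inner_diff_right)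
  ultimately have "trace (A - K) \<le> P \<bullet> (A - K)" by linarith
  also have "\<dots> \<le> norm P * norm (A - K)" by (rule norm_cauchy_schwarz)
  also have "norm P = sqrt (real CARD('r))"
    using column_projection_inner_self[OF P(1)] P(2) by (simp add: norm_eq_sqrt_inner)
  finally show ?thesis .
qed

text \<open>With \<open>K = X X\<^sup>T - \<lambda> P \<succeq> 0\<close> and \<open>F = M\<^sup>* - K\<close> one has
  \<open>\<parallel>X X\<^sup>T - M\<^sup>*\<parallel>\<^sup>2 - 2 \<lambda> \<langle>I - P, M\<^sup>*\<rangle> = \<parallel>F\<parallel>\<^sup>2 - 2 \<lambda> tr F + \<lambda>\<^sup>2 r \<ge> (\<parallel>F\<parallel> - \<lambda> \<surd>r)\<^sup>2\<close>.\<close>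

lemma complement_projection_inner_le:
  fixes X :: "real^'r^'n" and Mstar :: "real^'n^'n"
  assumes P: "is_column_projection P X" "trace P = real CARD('r)"
    and lam: "0 \<le> lam" and gain: "\<And>a. lam * (norm a)\<^sup>2 \<le> (norm (X *v a))\<^sup>2"
    and rk: "rank Mstar = CARD('r)"
  shows "2 * lam * ((mat 1 - P) \<bullet> Mstar) \<le> (norm (X ** transpose X - Mstar))\<^sup>2"
proof -
  define r where "r = real CARD('r)"
  define M where "M = X ** transpose X"
  define F where "F = Mstar - (M - lam *\<^sub>R P)"
  have Psym: "transpose P = P" and PX: "P ** X = X" using P(1) by (auto simp: is_column_projection_def)
  have "transpose (M - lam *\<^sub>R P) = M - lam *\<^sub>R P"
    by (simp add: M_def transpose_diff transpose_scalar matrix_transpose_mul Psym)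
  then have trF: "trace F \<le> sqrt r * norm F"
    using trace_diff_psd_le[OF rk psd_gram_minus_scaled_projection[OF P(1) lam gain]]
    by (simp add: F_def M_def r_def)
  have PP: "P \<bullet> P = r" using column_projection_inner_self[OF P(1)] P(2) by (simp add: r_def)
  have "P ** M = M" by (metis M_def PX matrix_mul_assoc)
  then have PM: "P \<bullet> M = trace M" using Psym by (simp add: inner_eq_trace)
  have "(norm (M - Mstar))\<^sup>2 - 2 * lam * ((mat 1 - P) \<bullet> Mstar) = (norm F)\<^sup>2 - 2 * lam * trace F + lam\<^sup>2 * r"
  proof -
    have "M - Mstar = lam *\<^sub>R P - F" by (simp add: F_def)
    then have "(norm (M - Mstar))\<^sup>2 = (lam *\<^sub>R P - F) \<bullet> (lam *\<^sub>R P - F)"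
      by (simp add: power2_norm_eq_inner)
    also have "\<dots> = lam\<^sup>2 * r - 2 * lam * (P \<bullet> F) + (norm F)\<^sup>2"
      unfolding inner_diff_left inner_diff_right inner_scaleR_left inner_scaleR_right
        inner_commute[of F P] PP power2_norm_eq_inner
      by (simp add: power2_eq_square algebra_simps)
    finally have e1: "(norm (M - Mstar))\<^sup>2 = lam\<^sup>2 * r - 2 * lam * (P \<bullet> F) + (norm F)\<^sup>2" .
    have e2: "P \<bullet> F = P \<bullet> Mstar - trace M + lam * r"
      by (simp add: F_def inner_diff_right PM PP)
    have "trace (lam *\<^sub>R P) = lam * trace P" by (simp add: trace_def sum_distrib_left)
    then have e3: "trace F = trace Mstar - trace M + lam * r"
      using P(2) by (simp add: F_def trace_sub r_def)
    have e4: "(mat 1 - P) \<bullet> Mstar = trace Mstar - P \<bullet> Mstar"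
      by (simp add: inner_diff_left inner_mat1)
    show ?thesis unfolding e1 e2 e3 e4 by (simp add: power2_eq_square algebra_simps)
  qed
  moreover have "2 * lam * trace F \<le> 2 * lam * (sqrt r * norm F)"
    using trF lam by (simp add: mult_left_mono)
  moreover have "0 \<le> (norm F - lam * sqrt r)\<^sup>2" by simp
  moreover have "(norm F - lam * sqrt r)\<^sup>2 = (norm F)\<^sup>2 - 2 * lam * (sqrt r * norm F) + lam\<^sup>2 * r"
    by (simp add: r_def power2_diff power_mult_distrib algebra_simps)
  ultimately show ?thesis by (simp add: M_def)
qed

lemma neg_inner_le_half_dist_sq:
  fixes S Mstar :: "real^'n^'n" and X :: "real^'r^'n"
  assumes sym: "transpose S = S" and SX: "S ** X = 0" and c: "0 \<le> c"
    and curv: "\<And>v y. norm v = 1 \<Longrightarrow> (X *v v) \<bullet> y = 0 \<Longrightarrow>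
      - (c * (norm (X *v v))\<^sup>2 * (norm y)\<^sup>2) \<le> y \<bullet> (S *v y)"
    and Mstar: "transpose Mstar = Mstar" "psd Mstar" "rank Mstar = CARD('r)"
  shows "- (S \<bullet> Mstar) \<le> c / 2 * (norm (X ** transpose X - Mstar))\<^sup>2"
proof -
  obtain v where v: "norm v = 1" "\<And>a. (norm (X *v v))\<^sup>2 * (norm a)\<^sup>2 \<le> (norm (X *v a))\<^sup>2"
    using exists_minimal_gain[of X] by blast
  define lam where "lam = (norm (X *v v))\<^sup>2"
  show ?thesis
  proof (cases "lam = 0")
    case True
    then have "psd S" using curv[OF v(1)] by (simp add: lam_def psd_def)
    then have "0 \<le> S \<bullet> Mstar" using psd_inner_nonneg Mstar(1,2) by blast
    moreover have "0 \<le> c / 2 * (norm (X ** transpose X - Mstar))\<^sup>2" using c by simp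
    ultimately show ?thesis by linarith
  next
    case False
    then have "0 < lam" by (simp add: lam_def)
    have "X *v a = 0 \<Longrightarrow> a = 0" for a
      using v(2)[of a] \<open>0 < lam\<close> by (simp add: lam_def mult_le_0_iff)
    then obtain P where P: "is_column_projection P X" "trace P = real CARD('r)"
      using exists_column_projection vec.inj_iff_eq_0 by blast
    have "transpose X *v y = 0 \<Longrightarrow> (X *v v) \<bullet> y = 0" for y
      by (metis dot_lmul_matrix inner_commute inner_zero_right transpose_matrix_vector)
    then have "psd (S + (c * lam) *\<^sub>R (mat 1 - P))"
      using psd_add_scaled_complement_projection[OF sym SX P(1)] curv[OF v(1)]
      by (simp add: lam_def mult.assoc)
    then have "0 \<le> (S + (c * lam) *\<^sub>R (mat 1 - P)) \<bullet> Mstar"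
      using psd_inner_nonneg Mstar(1,2) by blast
    then have "- (S \<bullet> Mstar) \<le> c / 2 * (2 * lam * ((mat 1 - P) \<bullet> Mstar))"
      by (simp add: inner_add_left algebra_simps)
    also have "\<dots> \<le> c / 2 * (norm (X ** transpose X - Mstar))\<^sup>2"
      using complement_projection_inner_le[OF P _ _ Mstar(3), of lam] \<open>0 < lam\<close> v(2) c
      by (intro mult_left_mono) (simp_all add: lam_def)
    finally show ?thesis .
  qed
qed

lemma Hessian_bounds_under_noise:
  fixes Hd :: "real^'n^'n \<Rightarrow> 'w::real_normed_vector \<Rightarrow> real^'n^'n \<Rightarrow> real^'n^'n"
  assumes RIP: "\<And>M N. rank M \<le> k \<Longrightarrow> rank N \<le> k \<Longrightarrow>
      (1 - \<delta>) * (norm N)\<^sup>2 \<le> Hd M 0 N \<bullet> N \<and> Hd M 0 N \<bullet> N \<le> (1 + \<delta>) * (norm N)\<^sup>2"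
    and noise: "\<And>v M K L. rank M \<le> k \<Longrightarrow> rank K \<le> k \<Longrightarrow> rank L \<le> k \<Longrightarrow>
      \<bar>Hd M v K \<bullet> L - Hd M 0 K \<bullet> L\<bar> \<le> \<zeta> * norm v * norm K * norm L"
    and \<zeta>: "0 \<le> \<zeta>" and w: "norm w \<le> \<epsilon>" and rk: "rank M \<le> k" "rank N \<le> k"
  shows "(1 - (\<delta> + \<zeta> * \<epsilon>)) * (norm N)\<^sup>2 \<le> Hd M w N \<bullet> N"
    "Hd M w N \<bullet> N \<le> (1 + (\<delta> + \<zeta> * \<epsilon>)) * (norm N)\<^sup>2"
proof -
  have "\<zeta> * norm w * (norm N)\<^sup>2 \<le> \<zeta> * \<epsilon> * (norm N)\<^sup>2"
    using w \<zeta> by (simp add: mult_left_mono mult_right_mono)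
  then have "\<bar>Hd M w N \<bullet> N - Hd M 0 N \<bullet> N\<bar> \<le> \<zeta> * \<epsilon> * (norm N)\<^sup>2"
    using noise[OF rk(1,2,2), of w] by (simp add: power2_eq_square mult.assoc)
  then show "(1 - (\<delta> + \<zeta> * \<epsilon>)) * (norm N)\<^sup>2 \<le> Hd M w N \<bullet> N"
    "Hd M w N \<bullet> N \<le> (1 + (\<delta> + \<zeta> * \<epsilon>)) * (norm N)\<^sup>2"
    using RIP[OF rk] by (simp_all add: algebra_simps abs_le_iff)
qed

lemma le_divide_of_quadratic_le:
  fixes a b x :: real
  assumes "0 < a" "0 \<le> b" "0 \<le> x" "a * x\<^sup>2 \<le> b * x"
  shows "x \<le> b / a"
proof (cases "x = 0")
  case False
  with assms have "a * x \<le> b" by (simp add: power2_eq_square mult_le_cancel_right_pos mult.assoc)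
  then show ?thesis using assms(1) by (simp add: pos_le_divide_eq mult.commute)
qed (use assms in simp)

lemma admissible_noise_level:
  fixes \<delta> \<zeta> \<epsilon> :: real
  assumes "0 \<le> \<delta>" "\<delta> < 1/3" "0 \<le> \<zeta>" "0 \<le> \<epsilon>" "\<zeta> = 0 \<or> \<epsilon> < (1/3 - \<delta>) / \<zeta>"
  shows "0 \<le> \<delta> + \<zeta> * \<epsilon>" "0 < 1 - 3 * (\<delta> + \<zeta> * \<epsilon>)"
proof -
  show "0 \<le> \<delta> + \<zeta> * \<epsilon>" using assms by simp
  have "\<zeta> * \<epsilon> < 1/3 - \<delta>"
    using assms by (cases "\<zeta> = 0") (auto simp: pos_less_divide_eq mult.commute)
  then show "0 < 1 - 3 * (\<delta> + \<zeta> * \<epsilon>)" by simp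
qed

theorem theorem1:
  fixes f :: "real^'n^'n \<Rightarrow> real^'m \<Rightarrow> real"
    and G :: "real^'n^'n \<Rightarrow> real^'m \<Rightarrow> real^'n^'n"
    and Hd :: "real^'n^'n \<Rightarrow> real^'m \<Rightarrow> real^'n^'n \<Rightarrow> real^'n^'n"
    and \<delta> \<zeta>1 \<zeta>2 \<epsilon> :: real
    and Mstar :: "real^'n^'n"
    and w :: "real^'m"
    and Xhat :: "real^'r^'n"
  assumes r_le_n: "CARD('r) \<le> CARD('n)"
    and grad: "\<And>M v. ((\<lambda>N. f N v) has_derivative (\<lambda>K. G M v \<bullet> K)) (at M)"
    and hess: "\<And>M v. ((\<lambda>N. G N v) has_derivative Hd M v) (at M)"
    and hess_cont: "\<And>v K. continuous_on UNIV (\<lambda>M. Hd M v K)"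
    and grad_sym: "\<And>M v. transpose (G M v) = G M v"
    and delta: "0 \<le> \<delta>" "\<delta> < 1/3"
    and RIP: "\<And>M N. rank M \<le> 2 * CARD('r) \<Longrightarrow> rank N \<le> 2 * CARD('r) \<Longrightarrow>
               (1 - \<delta>) * (norm N)\<^sup>2 \<le> Hd M 0 N \<bullet> N \<and> Hd M 0 N \<bullet> N \<le> (1 + \<delta>) * (norm N)\<^sup>2"
    and zeta: "0 \<le> \<zeta>1" "0 \<le> \<zeta>2"
    and noise1: "\<And>v M K. rank M \<le> 2 * CARD('r) \<Longrightarrow> rank K \<le> 2 * CARD('r) \<Longrightarrow>
               \<bar>(G M v - G M 0) \<bullet> K\<bar> \<le> \<zeta>1 * norm v * norm K"
    and noise2: "\<And>v M K L. rank M \<le> 2 * CARD('r) \<Longrightarrow> rank K \<le> 2 * CARD('r) \<Longrightarrow>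
               rank L \<le> 2 * CARD('r) \<Longrightarrow>
               \<bar>Hd M v K \<bullet> L - Hd M 0 K \<bullet> L\<bar> \<le> \<zeta>2 * norm v * norm K * norm L"
    and Mstar_sym: "transpose Mstar = Mstar"
    and Mstar_psd: "\<And>x. 0 \<le> x \<bullet> (Mstar *v x)"
    and Mstar_rank: "rank Mstar = CARD('r)"
    and Mstar_min: "\<And>M. transpose M = M \<Longrightarrow> (\<forall>x. 0 \<le> x \<bullet> (M *v x)) \<Longrightarrow>
               rank M \<le> CARD('r) \<Longrightarrow> f Mstar 0 \<le> f M 0"
    and Mstar_crit: "G Mstar 0 = 0"
    and eps: "0 \<le> \<epsilon>" "\<zeta>2 = 0 \<or> \<epsilon> < (1/3 - \<delta>) / \<zeta>2"
    and w_small: "norm w \<le> \<epsilon>"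
    and locmin: "\<exists>e>0. \<forall>Y::real^'r^'n. dist Y Xhat < e \<longrightarrow>
               f (Xhat ** transpose Xhat) w \<le> f (Y ** transpose Y) w"
  shows "norm (Xhat ** transpose Xhat - Mstar)
           \<le> 2 * \<zeta>1 * \<epsilon> / (1 - 3 * (\<delta> + \<zeta>2 * \<epsilon>))"
proof -
  define d where "d = \<delta> + \<zeta>2 * \<epsilon>"
  define M where "M = Xhat ** transpose Xhat"
  define Gw where "Gw = G M w"
  have d: "0 \<le> d" "0 < 1 - 3 * d"
    using admissible_noise_level[OF delta zeta(2) eps] by (simp_all add: d_def)
  have rk: "rank M \<le> 2 * CARD('r)" "rank Mstar \<le> 2 * CARD('r)" "rank (M - Mstar) \<le> 2 * CARD('r)"
    "rank (Mstar + t *\<^sub>R (M - Mstar)) \<le> 2 * CARD('r)" for t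
    using rank_factorization_le[of Xhat] Mstar_rank rank_diff_le[of M Mstar]
      rank_segment_le[of Mstar t M] by (simp_all add: M_def)
  have Hessian: "(1 - d) * (norm N)\<^sup>2 \<le> Hd A w N \<bullet> N" "Hd A w N \<bullet> N \<le> (1 + d) * (norm N)\<^sup>2"
    if "rank A \<le> 2 * CARD('r)" "rank N \<le> 2 * CARD('r)" for A N
    using Hessian_bounds_under_noise[where Hd = Hd and M = A and N = N, OF RIP noise2 zeta(2) w_small that]
    by (simp_all add: d_def)
  note opt = local_min_factorization_conditions[where f = "\<lambda>N. f N w" and G = "\<lambda>N. G N w"
      and Hd = "\<lambda>N. Hd N w", OF grad hess locmin, folded M_def Gw_def]
  have GX: "Gw ** Xhat = 0"
    using symmetric_annihilates_factor[OF _ opt(1)] grad_sym by (simp add: Gw_def)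
  have lower: "(1 - d) * (norm (M - Mstar))\<^sup>2 - \<zeta>1 * \<epsilon> * norm (M - Mstar) \<le> - (Gw \<bullet> Mstar)"
  proof -
    have "(1 - d) * (norm (M - Mstar))\<^sup>2 \<le> (Gw - G Mstar w) \<bullet> (M - Mstar)"
      using inner_increment_ge_curvature[where G = "\<lambda>N. G N w" and A = Mstar and E = "M - Mstar",
          OF hess Hessian(1)[OF rk(4,3)]] by (simp add: Gw_def)
    moreover have "Gw \<bullet> M = 0" using inner_matrix_mult_transpose[of Gw Xhat Xhat] GX by (simp add: M_def)
    moreover have "\<bar>G Mstar w \<bullet> (M - Mstar)\<bar> \<le> \<zeta>1 * norm w * norm (M - Mstar)"
      using noise1[OF rk(2,3), of w] Mstar_crit by simp
    moreover have "\<zeta>1 * norm w * norm (M - Mstar) \<le> \<zeta>1 * \<epsilon> * norm (M - Mstar)"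
      using w_small zeta(1) by (simp add: mult_left_mono mult_right_mono)
    ultimately show ?thesis by (simp add: inner_diff_left inner_diff_right)
  qed
  have upper: "- (Gw \<bullet> Mstar) \<le> (1 + d) / 2 * (norm (M - Mstar))\<^sup>2"
    unfolding M_def
  proof (rule neg_inner_le_half_dist_sq[OF _ GX])
    show "- ((1 + d) * (norm (Xhat *v v))\<^sup>2 * (norm y)\<^sup>2) \<le> y \<bullet> (Gw *v y)"
      if "norm v = 1" "(Xhat *v v) \<bullet> y = 0" for v y
      using second_order_direction_bound[OF opt(2) Hessian(2)[OF rk(1)] that] by simp
  qed (use grad_sym d Mstar_sym Mstar_psd Mstar_rank in \<open>auto simp: Gw_def psd_def\<close>)
  have "(1 - 3 * d) * (norm (M - Mstar))\<^sup>2 \<le> (2 * \<zeta>1 * \<epsilon>) * norm (M - Mstar)"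
    using lower upper by (simp add: algebra_simps)
  then show ?thesis
    using le_divide_of_quadratic_le[OF d(2)] zeta(1) eps(1) by (simp add: M_def d_def)
qed

end
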